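(* Let $G$ be a connected graph, $v_{\mathsf{init}}\in V(G)$, and $\mathsf{VC}$ a vertex cover of $G$ with $v_{\mathsf{init}}\in\mathsf{VC}$. Let $\widehat{E}$ be a multiset with elements from $E(G)$ such that $\mathsf{Graph}(\widehat{E})$ is connected, $v_{\mathsf{init}}\in V(\mathsf{Graph}(\widehat{E}))$, every vertex of $\mathsf{Graph}(\widehat{E})$ has even degree, and every edge appears at most twice in $\widehat{E}$. Then there exist a sub-multiset $\mathsf{CC}\subseteq\widehat{E}$ and a multiset $\mathcal{C}$ of cycles in $\mathsf{Graph}(\widehat{E})$ such that: (1) $\mathsf{Graph}(\mathsf{CC})$ is a $\overline{G}$-submultigraph, i.e., for every equivalence class $u^*\in\mathsf{EQ}$, $|V(\mathsf{Graph}(\mathsf{CC}))\cap u^*|\le\mathsf{NumVer}(u^* )$; (2) $\mathsf{Graph}(\mathsf{CC})$ is connected, $v_{\mathsf{init}}\in V(\mathsf{Graph}(\mathsf{CC}))$, and every vertex of $\mathsf{Graph}(\mathsf{CC})$ has even degree in it; (3) $V(\mathsf{Graph}(\mathsf{CC}))\cap\mathsf{VC}=V(\mathsf{Graph}(\widehat{E}))\cap\mathsf{VC}$; (4) at most $2|\mathsf{VC}|^2$ cycles in $\mathcal{C}$ have length other than $4$; (5) the cycles in $\mathcal{C}$ of length other than $4$ are simple; (6) the multiset sum $\mathsf{CC}\uplus\biguplus_{C\in\mathcal{C}}E(C)$ equals $\widehat{E}$.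
   Context: For a multiset $\widehat{E}$ of edges, $\mathsf{Graph}(\widehat{E})$ is the multigraph whose vertices are the endpoints of edges of $\widehat{E}$ and whose edge multiset is $\widehat{E}$; degrees count multiplicity. Paths/cycles: a path is a sequence $(v_0,\dots,v_\ell)$ with consecutive vertices adjacent (repetitions allowed), length $\ell$; a cycle has $v_0=v_\ell$; it is simple if $v_0,\dots,v_{\ell-1}$ are distinct; $E(C)$ is the multiset of traversed edges. Let $\mathsf{IND}=V(G)\setminus\mathsf{VC}$. Two vertices $u,v\in\mathsf{IND}$ are equivalent if $N_G(u)=N_G(v)$; $\mathsf{EQ}$ is the set of equivalence classes. The equivalence graph $G^*$ has vertex set $\mathsf{VC}\cup\mathsf{EQ}$ (classes as single vertices), with edges $\{u,v\}\in E(G)$ for $u,v\in\mathsf{VC}$, and edges $\{u^*,v\}$ for $u^*\in\mathsf{EQ}$, $v\in\mathsf{VC}$ whenever some $u\in u^*$ has $\{u,v\}\in E(G)$. For $u^*\in\mathsf{EQ}$, $\mathsf{NumVer}(u^* )=\min\{|u^*|,\,2^{|N_{G^*}(u^* )|}+|\mathsf{VC}|^2\}$. *)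

theory Defs
  imports Main "HOL-Library.Multiset"
begin

definition simple_graph :: "'a set \<Rightarrow> 'a set set \<Rightarrow> bool" where
  "simple_graph V E \<longleftrightarrow> finite V \<and> (\<forall>e\<in>E. e \<subseteq> V \<and> card e = 2)"

definition graph_connected :: "'a set \<Rightarrow> 'a set set \<Rightarrow> bool" where
  "graph_connected V E \<longleftrightarrow>
     (\<forall>u\<in>V. \<forall>v\<in>V. (\<lambda>x y. {x, y} \<in> E)\<^sup>*\<^sup>* u v)"

definition vertex_cover :: "'a set \<Rightarrow> 'a set set \<Rightarrow> 'a set \<Rightarrow> bool" where
  "vertex_cover V E VC \<longleftrightarrow> VC \<subseteq> V \<and> (\<forall>e\<in>E. e \<inter> VC \<noteq> {})"

definition nbhd :: "'a set set \<Rightarrow> 'a \<Rightarrow> 'a set" where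
  "nbhd E u = {w. {u, w} \<in> E}"

definition IND :: "'a set \<Rightarrow> 'a set \<Rightarrow> 'a set" where
  "IND V VC = V - VC"

definition EQ :: "'a set \<Rightarrow> 'a set set \<Rightarrow> 'a set \<Rightarrow> 'a set set" where
  "EQ V E VC = (\<lambda>u. {w \<in> IND V VC. nbhd E w = nbhd E u}) ` IND V VC"

definition nbhd_star :: "'a set set \<Rightarrow> 'a set \<Rightarrow> 'a set \<Rightarrow> 'a set" where
  "nbhd_star E VC U = {v \<in> VC. \<exists>u\<in>U. {u, v} \<in> E}"

definition NumVer :: "'a set set \<Rightarrow> 'a set \<Rightarrow> 'a set \<Rightarrow> nat" where
  "NumVer E VC U = min (card U) (2 ^ card (nbhd_star E VC U) + card VC ^ 2)"

definition mverts :: "'a set multiset \<Rightarrow> 'a set" where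
  "mverts M = \<Union> (set_mset M)"

definition mdeg :: "'a set multiset \<Rightarrow> 'a \<Rightarrow> nat" where
  "mdeg M v = size (filter_mset (\<lambda>e. v \<in> e) M)"

definition mconnected :: "'a set multiset \<Rightarrow> bool" where
  "mconnected M \<longleftrightarrow> graph_connected (mverts M) (set_mset M)"

definition all_even_deg :: "'a set multiset \<Rightarrow> bool" where
  "all_even_deg M \<longleftrightarrow> (\<forall>v\<in>mverts M. even (mdeg M v))"

text \<open>A cycle is a vertex sequence [v0,...,vl] with v0 = vl, consecutive vertices adjacent.
  Its length is l; its edge multiset E(C) is the multiset of traversed edges.\<close>
definition cyc_len :: "'a list \<Rightarrow> nat" where
  "cyc_len xs = length xs - 1"

definition cyc_edges :: "'a list \<Rightarrow> 'a set multiset" where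
  "cyc_edges xs = mset (map (\<lambda>(a, b). {a, b}) (zip xs (tl xs)))"

definition is_cycle_in :: "'a set multiset \<Rightarrow> 'a list \<Rightarrow> bool" where
  "is_cycle_in M xs \<longleftrightarrow> xs \<noteq> [] \<and> hd xs = last xs \<and>
     (\<forall>i < length xs - 1. {xs ! i, xs ! Suc i} \<in># M)"

definition simple_cycle :: "'a list \<Rightarrow> bool" where
  "simple_cycle xs \<longleftrightarrow> distinct (butlast xs)"

end

theory Submission
  imports Defs
begin

text \<open>Every vertex outside the vertex cover has all its neighbours in the cover. Among the
  independent vertices of \<open>Graph(Ehat)\<close> with the same neighbourhood keep one representative;
  the edges avoiding all other independent vertices form a skeleton that already connects every
  cover vertex of \<open>Graph(Ehat)\<close>. Starting from \<open>Ehat\<close>, repeatedly split off a closed walk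
  \<open>a, u, b, w, a\<close> of length 4 through two distinct non-representatives \<open>u, w\<close> with common
  neighbours \<open>a, b\<close> in the cover; this never touches the skeleton and preserves even degrees.
  When no such walk is left, every non-representative is determined by a pair of cover vertices,
  so there are at most \<open>|VC|\<^sup>2\<close> of them, while the representatives in a class \<open>u\<^sup>*\<close> are
  determined by their neighbourhoods, subsets of \<open>N\<^sub>G\<^sub>*(u\<^sup>*)\<close>. All split-off cycles have
  length 4, so conditions (4) and (5) hold trivially.\<close>

lemma subset_mset_diff_if_disjoint:
  assumes "A \<subseteq># C" and "set_mset A \<inter> set_mset B = {}"
  shows "A \<subseteq># C - B"
proof (rule mset_subset_eqI)
  fix x
  show "count A x \<le> count (C - B) x"
  proof (cases "x \<in># A")
    case True
    then have "count B x = 0" using assms(2) by (auto simp: not_in_iff[symmetric])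
    then show ?thesis using mset_subset_eq_count[OF assms(1)] by simp
  qed (simp add: not_in_iff)
qed

lemma mverts_mono: "A \<subseteq># B \<Longrightarrow> mverts A \<subseteq> mverts B"
  unfolding mverts_def by (auto dest: mset_subset_eqD)

lemma mdeg_diff: "X \<subseteq># M \<Longrightarrow> mdeg (M - X) v = mdeg M v - mdeg X v"
  unfolding mdeg_def by (metis multiset_filter_mono size_Diff_submset filter_diff_mset)

lemma all_even_deg_iff: "all_even_deg M \<longleftrightarrow> (\<forall>v. even (mdeg M v))"
proof -
  have "mdeg M v = 0" if "v \<notin> mverts M" for v
    using that unfolding mdeg_def mverts_def by (auto simp: filter_mset_eq_conv)
  then show ?thesis unfolding all_even_deg_def by fastforce
qed

lemma two_edges_at_even_vertex:
  assumes "even (mdeg M w)" and "w \<in> mverts M"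
  obtains x y where "{#x, y#} \<subseteq># M" and "w \<in> x" and "w \<in> y"
proof -
  let ?F = "filter_mset (\<lambda>e. w \<in> e) M"
  obtain e where "e \<in># M" "w \<in> e" using assms(2) unfolding mverts_def by blast
  then have x: "e \<in># ?F" by simp
  have "size ?F \<noteq> 1" using assms(1) unfolding mdeg_def by (metis odd_one)
  then have "?F - {#e#} \<noteq> {#}" by (metis insert_DiffM[OF x] size_single)
  then obtain y where "y \<in># ?F - {#e#}" by blast
  with x have "{#e, y#} \<subseteq># ?F" by (simp add: insert_subset_eq_iff)
  then have "{#e, y#} \<subseteq># M" using multiset_filter_subset by (rule subset_mset.order_trans)
  moreover have "w \<in> e" "w \<in> y" using x \<open>{#e, y#} \<subseteq># ?F\<close> by (auto dest: mset_subset_eqD)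
  ultimately show thesis by (rule that)
qed

lemma cyc_edges_four: "cyc_edges [a, u, b, w, a] = {#{a, u}, {u, b}, {b, w}, {w, a}#}"
  unfolding cyc_edges_def by simp

lemma is_cycle_in_four:
  assumes "{#{a, u}, {u, b}, {b, w}, {w, a}#} \<subseteq># M"
  shows "is_cycle_in M [a, u, b, w, a]"
  using mset_subset_eqD[OF assms] unfolding is_cycle_in_def by (auto simp: less_Suc_eq)

lemma even_mdeg_four:
  assumes "a \<noteq> u" "a \<noteq> w" "b \<noteq> u" "b \<noteq> w" "u \<noteq> w"
  shows "even (mdeg {#{a, u}, {u, b}, {b, w}, {w, a}#} v)"
  using assms unfolding mdeg_def by auto

abbreviation madj :: "'a set multiset \<Rightarrow> 'a \<Rightarrow> 'a \<Rightarrow> bool" where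
  "madj M \<equiv> \<lambda>x y. {x, y} \<in># M"

lemma madj_rtranclp_sym:
  assumes "(madj M)\<^sup>*\<^sup>* x y"
  shows "(madj M)\<^sup>*\<^sup>* y x"
proof -
  have "(madj M)\<inverse>\<inverse> = madj M" by (auto simp: fun_eq_iff insert_commute)
  then show ?thesis using rtranclp_converseI[OF assms] by simp
qed

locale cover_multigraph =
  fixes V :: "'a set" and E :: "'a set set" and VC :: "'a set" and Ehat :: "'a set multiset"
  assumes simple: "simple_graph V E"
    and cover: "vertex_cover V E VC"
    and edges_in_E: "set_mset Ehat \<subseteq> E"
begin

lemma finite_VC: "finite VC"
  using simple cover finite_subset unfolding simple_graph_def vertex_cover_def by blast

lemma edge_E: "e \<in># Ehat \<Longrightarrow> e \<in> E"
  using edges_in_E by blast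

lemma finite_mverts: "finite (mverts CC)" if "CC \<subseteq># Ehat"
proof -
  have "mverts CC \<subseteq> V"
    using that edge_E simple unfolding mverts_def simple_graph_def by (auto dest: mset_subset_eqD)
  then show ?thesis using simple finite_subset unfolding simple_graph_def by blast
qed

lemma edge_cases:
  assumes "e \<in> E" and "x \<in> e"
  obtains z where "z \<noteq> x" and "e = {x, z}" and "x \<in> VC \<or> z \<in> VC"
proof -
  have "card e = 2" and "e \<inter> VC \<noteq> {}"
    using assms simple cover unfolding simple_graph_def vertex_cover_def by auto
  then obtain p q where "p \<noteq> q" "e = {p, q}" by (meson card_2_iff)
  then have "\<exists>z. z \<noteq> x \<and> e = {x, z} \<and> (x \<in> VC \<or> z \<in> VC)"
    using assms(2) \<open>e \<inter> VC \<noteq> {}\<close> by auto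
  then show ?thesis using that by blast
qed

lemma edge_at_independent:
  assumes "e \<in> E" and "x \<in> e" and "x \<notin> VC"
  obtains a where "a \<in> VC" and "e = {x, a}"
  using edge_cases[OF assms(1,2)] assms(3) by metis

definition nbrs :: "'a \<Rightarrow> 'a set" where
  "nbrs y = {a. {a, y} \<in># Ehat}"

definition rep :: "'a \<Rightarrow> 'a" where
  "rep y = (SOME r. r \<in> mverts Ehat - VC \<and> nbrs r = nbrs y)"

definition reps :: "'a set" where
  "reps = rep ` (mverts Ehat - VC)"

definition nonreps :: "'a set" where
  "nonreps = mverts Ehat - VC - reps"

definition skeleton :: "'a set multiset" where
  "skeleton = filter_mset (\<lambda>e. e \<inter> nonreps = {}) Ehat"

lemma rep_in_independent: "y \<in> mverts Ehat - VC \<Longrightarrow> rep y \<in> mverts Ehat - VC"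
  unfolding rep_def by (rule someI2[of _ y]) auto

lemma nbrs_rep: "y \<in> mverts Ehat - VC \<Longrightarrow> nbrs (rep y) = nbrs y"
  unfolding rep_def by (rule someI2[of _ y]) auto

lemma rep_eq_if_nbrs_eq: "nbrs x = nbrs y \<Longrightarrow> rep x = rep y"
  unfolding rep_def by simp

lemma rep_rep:
  assumes "r \<in> reps"
  shows "rep r = r"
proof -
  obtain y where y: "y \<in> mverts Ehat - VC" "r = rep y" using assms unfolding reps_def by blast
  then show ?thesis using rep_eq_if_nbrs_eq[OF nbrs_rep[OF y(1)]] by simp
qed

lemma nbrs_subset_VC: "y \<notin> VC \<Longrightarrow> nbrs y \<subseteq> VC"
  unfolding nbrs_def
  by (auto elim!: edge_at_independent[OF edge_E, of _ y] simp: insert_commute doubleton_eq_iff)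

lemma skeleton_edge_VC: "{y, z} \<in># Ehat \<Longrightarrow> y \<in> VC \<Longrightarrow> z \<in> VC \<Longrightarrow> {y, z} \<in># skeleton"
  unfolding skeleton_def nonreps_def by auto

lemma skeleton_edge_rep:
  assumes "{y, z} \<in># Ehat" and "y \<in> VC" and "z \<notin> VC"
  shows "{y, rep z} \<in># skeleton"
proof -
  have z: "z \<in> mverts Ehat - VC" using assms unfolding mverts_def by auto
  have "y \<in> nbrs z" using assms(1) unfolding nbrs_def by auto
  then have "{y, rep z} \<in># Ehat" using nbrs_rep[OF z] unfolding nbrs_def by auto
  moreover have "rep z \<in> reps" using z unfolding reps_def by auto
  ultimately show ?thesis using assms(2) unfolding skeleton_def nonreps_def by auto
qed

lemma VC_vertex_in_skeleton:
  assumes "a \<in> mverts Ehat" and "a \<in> VC"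
  shows "a \<in> mverts skeleton"
proof -
  obtain e where e: "e \<in># Ehat" "a \<in> e" using assms(1) unfolding mverts_def by auto
  then obtain z where z: "e = {a, z}" by (metis edge_cases edge_E)
  have "{a, z} \<in># skeleton \<or> {a, rep z} \<in># skeleton"
    using skeleton_edge_VC skeleton_edge_rep e z assms(2) by metis
  then show ?thesis unfolding mverts_def by blast
qed

lemma skeleton_reaches:
  assumes "(madj Ehat)\<^sup>*\<^sup>* x0 x" and "x0 \<in> VC"
  shows "(madj skeleton)\<^sup>*\<^sup>* x0 (if x \<in> VC then x else rep x)"
  using assms(1)
proof (induction rule: rtranclp_induct)
  case (step y z)
  have e: "{y, z} \<in># Ehat" using step(2) .
  consider "y \<in> VC" "z \<in> VC" | "y \<in> VC" "z \<notin> VC" | "y \<notin> VC" "z \<in> VC"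
    using edge_cases[OF edge_E[OF e], of y] by (auto simp: doubleton_eq_iff)
  then have "madj skeleton (if y \<in> VC then y else rep y) (if z \<in> VC then z else rep z)"
  proof cases
    case 3
    have "{z, y} \<in># Ehat" using e by (simp add: insert_commute)
    from skeleton_edge_rep[OF this 3(2,1)] 3 show ?thesis by (simp add: insert_commute)
  qed (use skeleton_edge_VC[OF e] skeleton_edge_rep[OF e] in simp_all)
  with step(3) show ?case by (rule rtranclp.rtrancl_into_rtrancl)
qed (use assms(2) in simp)

lemma skeleton_connects_VC:
  assumes "mconnected Ehat" and "a \<in> mverts Ehat \<inter> VC" and "b \<in> mverts Ehat \<inter> VC"
  shows "(madj skeleton)\<^sup>*\<^sup>* a b"
proof -
  have "(madj Ehat)\<^sup>*\<^sup>* a b"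
    using assms(1) IntD1[OF assms(2)] IntD1[OF assms(3)] unfolding mconnected_def graph_connected_def
    by blast
  from skeleton_reaches[OF this IntD2[OF assms(2)]] show ?thesis using IntD2[OF assms(3)] by simp
qed

lemma mconnected_if_skeleton_subset:
  assumes "mconnected Ehat" and "skeleton \<subseteq># CC" and "CC \<subseteq># Ehat"
  shows "mconnected CC"
proof -
  have "madj skeleton \<le> madj CC" using mset_subset_eqD[OF assms(2)] by (intro predicate2I)
  then have VC_conn: "(madj CC)\<^sup>*\<^sup>* a b" if "a \<in> mverts Ehat \<inter> VC" "b \<in> mverts Ehat \<inter> VC" for a b
    using skeleton_connects_VC[OF assms(1) that] by (rule rtranclp_mono[THEN predicate2D])
  have near_VC: "\<exists>a \<in> mverts Ehat \<inter> VC. (madj CC)\<^sup>*\<^sup>* a x" if x: "x \<in> mverts CC" for x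
  proof -
    obtain e where e: "e \<in># CC" "x \<in> e" using x unfolding mverts_def by auto
    have "e \<in># Ehat" using mset_subset_eqD[OF assms(3) e(1)] .
    then obtain z where z: "e = {x, z}" "x \<in> VC \<or> z \<in> VC" using edge_cases[OF edge_E e(2)] by metis
    have "x \<in> mverts Ehat" "z \<in> mverts Ehat" using \<open>e \<in># Ehat\<close> z(1) unfolding mverts_def by auto
    moreover have "(madj CC)\<^sup>*\<^sup>* z x"
      using e(1) z(1) by (intro r_into_rtranclp) (simp add: insert_commute)
    ultimately show ?thesis using z(2) by (meson IntI rtranclp.rtrancl_refl)
  qed
  show ?thesis unfolding mconnected_def graph_connected_def
  proof (intro ballI)
    fix x y assume "x \<in> mverts CC" "y \<in> mverts CC"
    with near_VC obtain a b where ab: "a \<in> mverts Ehat \<inter> VC" "b \<in> mverts Ehat \<inter> VC"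
      and a_x: "(madj CC)\<^sup>*\<^sup>* a x" and b_y: "(madj CC)\<^sup>*\<^sup>* b y" by meson
    have "(madj CC)\<^sup>*\<^sup>* x a" using a_x by (rule madj_rtranclp_sym)
    also have "(madj CC)\<^sup>*\<^sup>* a b" using ab by (rule VC_conn)
    also note b_y
    finally show "(madj CC)\<^sup>*\<^sup>* x y" .
  qed
qed

lemma VC_vertices_if_skeleton_subset:
  assumes "skeleton \<subseteq># CC" and "CC \<subseteq># Ehat"
  shows "mverts CC \<inter> VC = mverts Ehat \<inter> VC"
  using mverts_mono[OF assms(1)] mverts_mono[OF assms(2)] VC_vertex_in_skeleton by blast

definition four_cycle_split :: "'a set multiset \<Rightarrow> 'a list multiset \<Rightarrow> bool" where
  "four_cycle_split CC Cs \<longleftrightarrow> skeleton \<subseteq># CC \<and> CC + \<Sum>\<^sub># (image_mset cyc_edges Cs) = Ehat \<and>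
     (\<forall>C\<in>#Cs. is_cycle_in Ehat C \<and> cyc_len C = 4) \<and> all_even_deg CC"

definition minimal_four_cycle_split :: "'a set multiset \<Rightarrow> 'a list multiset \<Rightarrow> bool" where
  "minimal_four_cycle_split CC Cs \<longleftrightarrow> four_cycle_split CC Cs \<and>
     (\<forall>CC' Cs'. four_cycle_split CC' Cs' \<longrightarrow> size CC \<le> size CC')"

lemma four_cycle_split_Ehat: "all_even_deg Ehat \<Longrightarrow> four_cycle_split Ehat {#}"
  unfolding four_cycle_split_def skeleton_def by simp

lemma four_cycle_split_subset: "four_cycle_split CC Cs \<Longrightarrow> CC \<subseteq># Ehat"
  unfolding four_cycle_split_def by (metis mset_subset_eq_add_left)

lemma ex_minimal_four_cycle_split:
  assumes "all_even_deg Ehat"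
  obtains CC Cs where "minimal_four_cycle_split CC Cs"
proof -
  obtain p where "four_cycle_split (fst p) (snd p)"
    "\<forall>q. four_cycle_split (fst q) (snd q) \<longrightarrow> size (fst p) \<le> size (fst q)"
    using ex_has_least_nat[of "\<lambda>p. four_cycle_split (fst p) (snd p)" "(Ehat, {#})" "\<lambda>p. size (fst p)"]
      four_cycle_split_Ehat[OF assms] by auto
  then have "minimal_four_cycle_split (fst p) (snd p)"
    unfolding minimal_four_cycle_split_def by (metis fst_conv snd_conv)
  then show ?thesis using that by blast
qed

text \<open>The cover vertices \<open>a\<close> and \<open>b\<close> may coincide; the closed walk then uses \<open>{a, u}\<close> and
  \<open>{a, w}\<close> twice each. It is still a cycle in the sense of \<open>is_cycle_in\<close>, and being of length 4
  it need not be simple.\<close>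
lemma four_cycle_split_remove:
  assumes split: "four_cycle_split CC Cs"
    and u: "u \<in> nonreps" and w: "w \<in> nonreps" and "u \<noteq> w" and a: "a \<in> VC" and b: "b \<in> VC"
    and su: "{#{a, u}, {u, b}#} \<subseteq># CC" and sw: "{#{a, w}, {w, b}#} \<subseteq># CC"
  shows "four_cycle_split (CC - cyc_edges [a, u, b, w, a]) (add_mset [a, u, b, w, a] Cs)"
    and "size (CC - cyc_edges [a, u, b, w, a]) < size CC"
proof -
  let ?X = "cyc_edges [a, u, b, w, a]"
  have "u \<notin> VC" "w \<notin> VC" using u w unfolding nonreps_def by auto
  then have distinct: "a \<noteq> u" "a \<noteq> w" "b \<noteq> u" "b \<noteq> w" "u \<noteq> w" using a b \<open>u \<noteq> w\<close> by auto
  have "{#{a, u}, {u, b}#} \<subseteq># CC - {#{b, w}, {w, a}#}"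
    using su distinct by (intro subset_mset_diff_if_disjoint) (auto simp: doubleton_eq_iff)
  moreover have "{#{b, w}, {w, a}#} \<subseteq># CC" using sw by (simp add: insert_commute add_mset_commute)
  ultimately have "{#{a, u}, {u, b}#} + {#{b, w}, {w, a}#} \<subseteq># CC"
    by (simp add: subset_mset.le_diff_conv2)
  then have X: "?X \<subseteq># CC" by (simp add: cyc_edges_four add_mset_commute)
  have "skeleton \<subseteq># CC - ?X"
    using split u w unfolding four_cycle_split_def cyc_edges_four
    by (intro subset_mset_diff_if_disjoint) (auto simp: skeleton_def)
  moreover have "CC - ?X + \<Sum>\<^sub># (image_mset cyc_edges (add_mset [a, u, b, w, a] Cs)) = Ehat"
    using split X unfolding four_cycle_split_def by (simp add: add.assoc[symmetric])
  moreover have "is_cycle_in Ehat [a, u, b, w, a]"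
    using is_cycle_in_four X four_cycle_split_subset[OF split] unfolding cyc_edges_four
    by (meson subset_mset.order_trans)
  moreover have "even (mdeg (CC - ?X) v)" for v
  proof -
    have "even (mdeg ?X v)" unfolding cyc_edges_four using distinct by (rule even_mdeg_four)
    moreover have "even (mdeg CC v)" using split unfolding four_cycle_split_def all_even_deg_iff by blast
    moreover have "mdeg ?X v \<le> mdeg CC v"
      unfolding mdeg_def by (rule size_mset_mono[OF multiset_filter_mono[OF X]])
    ultimately show ?thesis using mdeg_diff[OF X, of v] by auto
  qed
  ultimately show "four_cycle_split (CC - ?X) (add_mset [a, u, b, w, a] Cs)"
    using split unfolding four_cycle_split_def all_even_deg_iff by (simp add: cyc_len_def)
  show "size (CC - ?X) < size CC"
    using size_Diff_submset[OF X] size_mset_mono[OF X] by (simp add: cyc_edges_four)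
qed

lemma minimal_four_cycle_split_no_twins:
  assumes "minimal_four_cycle_split CC Cs"
    and "u \<in> nonreps" and "w \<in> nonreps" and "a \<in> VC" and "b \<in> VC"
    and "{#{a, u}, {u, b}#} \<subseteq># CC" and "{#{a, w}, {w, b}#} \<subseteq># CC"
  shows "u = w"
proof (rule ccontr)
  assume "u \<noteq> w"
  note smaller = four_cycle_split_remove[of CC Cs u w a b]
  show False
    using assms smaller \<open>u \<noteq> w\<close> unfolding minimal_four_cycle_split_def by (meson not_le)
qed

lemma card_nonreps_minimal_four_cycle_split:
  assumes split: "minimal_four_cycle_split CC Cs"
  shows "card (nonreps \<inter> mverts CC) \<le> card VC ^ 2"
proof -
  define nbr_pair where "nbr_pair w =
      (SOME p. fst p \<in> VC \<and> snd p \<in> VC \<and> {#{fst p, w}, {w, snd p}#} \<subseteq># CC)" for w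
  have nbr_pair: "fst (nbr_pair w) \<in> VC \<and> snd (nbr_pair w) \<in> VC \<and>
      {#{fst (nbr_pair w), w}, {w, snd (nbr_pair w)}#} \<subseteq># CC" if w: "w \<in> nonreps \<inter> mverts CC" for w
  proof -
    have "w \<notin> VC" using w unfolding nonreps_def by auto
    have "even (mdeg CC w)"
      using split unfolding minimal_four_cycle_split_def four_cycle_split_def all_even_deg_iff by blast
    moreover have "w \<in> mverts CC" using w by blast
    ultimately obtain x y where xy: "{#x, y#} \<subseteq># CC" "w \<in> x" "w \<in> y"
      by (rule two_edges_at_even_vertex)
    have "CC \<subseteq># Ehat"
      using split four_cycle_split_subset unfolding minimal_four_cycle_split_def by blast
    then have "x \<in># Ehat" "y \<in># Ehat" using xy(1) by (auto dest: mset_subset_eqD)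
    obtain a where a: "a \<in> VC" "x = {w, a}"
      using edge_at_independent[OF edge_E[OF \<open>x \<in># Ehat\<close>] xy(2) \<open>w \<notin> VC\<close>] .
    obtain b where b: "b \<in> VC" "y = {w, b}"
      using edge_at_independent[OF edge_E[OF \<open>y \<in># Ehat\<close>] xy(3) \<open>w \<notin> VC\<close>] .
    have "{#{a, w}, {w, b}#} \<subseteq># CC" using xy(1) a b by (simp add: insert_commute)
    then have "\<exists>p. fst p \<in> VC \<and> snd p \<in> VC \<and> {#{fst p, w}, {w, snd p}#} \<subseteq># CC"
      using a(1) b(1) by (intro exI[of _ "(a, b)"]) simp
    from someI_ex[OF this] show ?thesis unfolding nbr_pair_def .
  qed
  have "inj_on nbr_pair (nonreps \<inter> mverts CC)"
  proof (rule inj_onI)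
    fix x y assume x: "x \<in> nonreps \<inter> mverts CC" and y: "y \<in> nonreps \<inter> mverts CC"
      and "nbr_pair x = nbr_pair y"
    then show "x = y"
      using minimal_four_cycle_split_no_twins[OF split, of x y "fst (nbr_pair x)" "snd (nbr_pair x)"]
        nbr_pair[OF x] nbr_pair[OF y] by simp
  qed
  moreover have "nbr_pair ` (nonreps \<inter> mverts CC) \<subseteq> VC \<times> VC"
  proof (rule image_subsetI)
    fix w assume "w \<in> nonreps \<inter> mverts CC"
    then show "nbr_pair w \<in> VC \<times> VC" using nbr_pair[of w] by (simp add: mem_Times_iff)
  qed
  ultimately have "card (nonreps \<inter> mverts CC) \<le> card (VC \<times> VC)"
    using finite_cartesian_product[OF finite_VC finite_VC] by (rule card_inj_on_le)
  then show ?thesis by (simp add: card_cartesian_product power2_eq_square)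
qed

lemma card_reps_le:
  "card (reps \<inter> U) \<le> 2 ^ card (nbhd_star E VC U)"
proof -
  have fin: "finite (nbhd_star E VC U)"
    using finite_VC unfolding nbhd_star_def by simp
  have "inj_on nbrs (reps \<inter> U)"
    using rep_rep rep_eq_if_nbrs_eq by (intro inj_onI) (metis IntD1)
  moreover have "nbrs ` (reps \<inter> U) \<subseteq> Pow (nbhd_star E VC U)"
  proof (intro image_subsetI PowI subsetI)
    fix r a assume r: "r \<in> reps \<inter> U" and a: "a \<in> nbrs r"
    have "r \<notin> VC" using r rep_in_independent unfolding reps_def by auto
    then have "a \<in> VC" using nbrs_subset_VC a by blast
    moreover have "{r, a} \<in> E" using a edge_E unfolding nbrs_def by (simp add: insert_commute)
    ultimately show "a \<in> nbhd_star E VC U" using r unfolding nbhd_star_def by blast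
  qed
  ultimately have "card (reps \<inter> U) \<le> card (Pow (nbhd_star E VC U))"
    using card_inj_on_le fin by blast
  then show ?thesis by (simp add: card_Pow[OF fin])
qed

lemma card_class_le_NumVer:
  assumes split: "minimal_four_cycle_split CC Cs" and U: "finite U" "U \<inter> VC = {}"
  shows "card (mverts CC \<inter> U) \<le> NumVer E VC U"
proof -
  have "CC \<subseteq># Ehat"
    using split four_cycle_split_subset unfolding minimal_four_cycle_split_def by blast
  then have "mverts CC \<inter> U \<subseteq> (reps \<inter> U) \<union> (nonreps \<inter> mverts CC)"
    using mverts_mono[of CC Ehat] U(2) unfolding nonreps_def by blast
  moreover have "finite (reps \<inter> U)" "finite (nonreps \<inter> mverts CC)"
    using U(1) finite_mverts[OF \<open>CC \<subseteq># Ehat\<close>] by simp_all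
  ultimately have "card (mverts CC \<inter> U) \<le> card (reps \<inter> U) + card (nonreps \<inter> mverts CC)"
    by (meson card_Un_le card_mono finite_UnI order_trans)
  also have "\<dots> \<le> 2 ^ card (nbhd_star E VC U) + card VC ^ 2"
    using card_reps_le card_nonreps_minimal_four_cycle_split[OF split] by (rule add_mono)
  finally have "card (mverts CC \<inter> U) \<le> 2 ^ card (nbhd_star E VC U) + card VC ^ 2" .
  moreover have "card (mverts CC \<inter> U) \<le> card U" using U(1) by (simp add: card_mono)
  ultimately show ?thesis unfolding NumVer_def by simp
qed

end

lemma EQ_subset_IND: "U \<in> EQ V E VC \<Longrightarrow> U \<subseteq> V - VC"
  unfolding EQ_def IND_def by auto

theorem mainTheorem9:
  fixes V :: "'a set" and E :: "'a set set" and VC :: "'a set" and v_init :: 'a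
    and Ehat :: "'a set multiset"
  assumes "simple_graph V E" and "graph_connected V E"
    and "v_init \<in> V" and "vertex_cover V E VC" and "v_init \<in> VC"
    and "set_mset Ehat \<subseteq> E"
    and "mconnected Ehat" and "v_init \<in> mverts Ehat" and "all_even_deg Ehat"
    and "\<forall>e. count Ehat e \<le> 2"
  shows "\<exists>CC Cs. CC \<subseteq># Ehat \<and> (\<forall>C\<in>#Cs. is_cycle_in Ehat C) \<and>
     (\<forall>U\<in>EQ V E VC. card (mverts CC \<inter> U) \<le> NumVer E VC U) \<and>
     mconnected CC \<and> v_init \<in> mverts CC \<and> all_even_deg CC \<and>
     mverts CC \<inter> VC = mverts Ehat \<inter> VC \<and>
     size (filter_mset (\<lambda>C. cyc_len C \<noteq> 4) Cs) \<le> 2 * card VC ^ 2 \<and>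
     (\<forall>C\<in>#Cs. cyc_len C \<noteq> 4 \<longrightarrow> simple_cycle C) \<and>
     CC + sum_mset (image_mset cyc_edges Cs) = Ehat"
proof -
  interpret cover_multigraph V E VC Ehat
    using assms by unfold_locales
  obtain CC Cs where min: "minimal_four_cycle_split CC Cs"
    using ex_minimal_four_cycle_split assms(9) by blast
  then have split: "four_cycle_split CC Cs"
    unfolding minimal_four_cycle_split_def by blast
  have sub: "CC \<subseteq># Ehat" using split by (rule four_cycle_split_subset)
  have skel: "skeleton \<subseteq># CC" using split unfolding four_cycle_split_def by blast
  have "finite V" using assms(1) unfolding simple_graph_def by blast
  have no_long_cycles: "filter_mset (\<lambda>C. cyc_len C \<noteq> 4) Cs = {#}"
    using split unfolding four_cycle_split_def by (simp add: filter_mset_eq_conv)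
  have classes: "card (mverts CC \<inter> U) \<le> NumVer E VC U" if "U \<in> EQ V E VC" for U
  proof (rule card_class_le_NumVer[OF min])
    show "finite U" using EQ_subset_IND[OF that] \<open>finite V\<close> finite_subset by blast
    show "U \<inter> VC = {}" using EQ_subset_IND[OF that] by blast
  qed
  have cover_vertices: "mverts CC \<inter> VC = mverts Ehat \<inter> VC"
    using skel sub by (rule VC_vertices_if_skeleton_subset)
  then have "v_init \<in> mverts CC" using assms(5,8) by blast
  with classes cover_vertices mconnected_if_skeleton_subset[OF assms(7) skel sub]
  show ?thesis
    using split sub unfolding four_cycle_split_def
    by (intro exI[of _ CC] exI[of _ Cs] conjI) (simp_all add: no_long_cycles)
qed

end
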